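(* Let $K\ge2$ and $\alpha\in\mathbb{R}$. The function $-S_\alpha$ is $C_{\alpha,K}$-strongly convex with respect to $\|\cdot\|_1$ on $\operatorname{relint}(\Delta^K)$, i.e. for all $p,q\in\operatorname{relint}(\Delta^K)$, \[ -S_\alpha(p)\ \ge\ -S_\alpha(q)+\langle\nabla(-S_\alpha)(q),p-q\rangle+\frac{C_{\alpha,K}}{2}\|p-q\|_1^2, \] and $C_{\alpha,K}$ is the largest constant for which this holds. Here $C_{\alpha,K}=2^{1-\alpha}$ if $\alpha\le 1$; $C_{\alpha,K}=K^{1-\alpha}$ if $\alpha\in(1,2]$ and $K$ even; $C_{\alpha,K}=K^{1-\alpha}\left(\frac{(1-\frac1K)^{\frac{1-\alpha}{3-\alpha}}+(1+\frac1K)^{\frac{1-\alpha}{3-\alpha}}}{2}\right)^{3-\alpha}$ if $\alpha\in(1,2]$ and $K$ odd; $C_{\alpha,K}=2^{1-\max\{\alpha,3\}}$ if $\alpha>2$ and $K=2$; and $C_{\alpha,K}=0$ if $\alpha>2$ and $K\ge3$.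
   Context: $\Delta^K=\{p\in[0,1]^K:\sum_k p_k=1\}$, $\operatorname{relint}(\Delta^K)=\Delta^K\cap(0,1)^K$. For $p\in(0,+\infty)^K$: $S_\alpha(p)=\frac{\sum_k p_k^\alpha}{\alpha(1-\alpha)}$ if $\alpha\notin\{0,1\}$, $S_0(p)=\sum_k\ln p_k$, $S_1(p)=-\sum_k p_k\ln p_k$. $\|x\|_1=\sum_k|x_k|$. *)

theory Defs
  imports "HOL-Analysis.Analysis"
begin

text \<open>Vectors in R^K are represented as functions nat => real; only the
coordinates 0..K-1 are relevant.\<close>

definition relint_simplex :: "nat \<Rightarrow> (nat \<Rightarrow> real) set" where
  "relint_simplex K = {p. (\<forall>k<K. 0 < p k \<and> p k < 1) \<and> (\<Sum>k<K. p k) = 1}"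

definition S :: "nat \<Rightarrow> real \<Rightarrow> (nat \<Rightarrow> real) \<Rightarrow> real" where
  "S K \<alpha> p =
     (if \<alpha> = 0 then (\<Sum>k<K. ln (p k))
      else if \<alpha> = 1 then - (\<Sum>k<K. p k * ln (p k))
      else (\<Sum>k<K. p k powr \<alpha>) / (\<alpha> * (1 - \<alpha>)))"

definition grad :: "((nat \<Rightarrow> real) \<Rightarrow> real) \<Rightarrow> (nat \<Rightarrow> real) \<Rightarrow> nat \<Rightarrow> real" where
  "grad f q k = deriv (\<lambda>t. f (q(k := t))) (q k)"

definition norm1 :: "nat \<Rightarrow> (nat \<Rightarrow> real) \<Rightarrow> real" where
  "norm1 K x = (\<Sum>k<K. \<bar>x k\<bar>)"

definition strongly_convex_relint :: "nat \<Rightarrow> ((nat \<Rightarrow> real) \<Rightarrow> real) \<Rightarrow> real \<Rightarrow> bool" where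
  "strongly_convex_relint K f c \<longleftrightarrow>
     (\<forall>p\<in>relint_simplex K. \<forall>q\<in>relint_simplex K.
        f p \<ge> f q + (\<Sum>k<K. grad f q k * (p k - q k))
               + c / 2 * (norm1 K (\<lambda>k. p k - q k))\<^sup>2)"

definition C :: "real \<Rightarrow> nat \<Rightarrow> real" where
  "C \<alpha> K =
     (if \<alpha> \<le> 1 then 2 powr (1 - \<alpha>)
      else if \<alpha> \<le> 2 then
        (if even K then real K powr (1 - \<alpha>)
         else real K powr (1 - \<alpha>) *
           ((((1 - 1 / real K) powr ((1 - \<alpha>) / (3 - \<alpha>))
              + (1 + 1 / real K) powr ((1 - \<alpha>) / (3 - \<alpha>))) / 2) powr (3 - \<alpha>)))
      else if K = 2 then 2 powr (1 - max \<alpha> 3)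
      else 0)"

end

(*
  Along a segment q + s x the function -S_alpha has second derivative
  H(r, x) = Sum_k r_k^(alpha - 2) x_k^2 at r = q + s x, so by Taylor's formula -S_alpha is
  c-strongly convex on the relative interior exactly when c ||x||_1^2 <= H(r, x) for every r
  there and every x with Sum_k x_k = 0.

  Let P and N be the supports of the positive and negative parts of x. Both parts carry mass
  ||x||_1 / 2, so Cauchy-Schwarz on each reduces this Hessian bound to
  4 c <= 1 / Sum_P r_k^(2 - alpha) + 1 / Sum_N r_k^(2 - alpha).
  For alpha <= 1 the right-hand side is controlled by superadditivity of t^(2 - alpha) and
  convexity of t^(alpha - 2); for 1 < alpha <= 2 by the power-mean inequality, Radon's
  inequality and a majorization argument showing that |P| = floor(K/2), |N| = ceil(K/2) is the
  worst case. For alpha > 2 the bound is positive only when K = 2.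

  Optimality: x = e_0 - e_1 with r approaching suitable two-point configurations attains
  C_{alpha,K} in the limit, except for 1 < alpha <= 2, where x is spread evenly with opposite
  signs over the two halves of a balanced split and r makes every inequality above tight.
*)

theory Submission
  imports Defs
begin

lemma Cauchy_Schwarz_ineq_sum_div:
  fixes v x :: "'a \<Rightarrow> real"
  assumes v: "\<And>k. k \<in> A \<Longrightarrow> v k > 0" and "(\<Sum>k\<in>A. v k) > 0"
  shows "(\<Sum>k\<in>A. x k)\<^sup>2 / (\<Sum>k\<in>A. v k) \<le> (\<Sum>k\<in>A. (x k)\<^sup>2 / v k)"
proof -
  have "(\<Sum>k\<in>A. x k)\<^sup>2 = (\<Sum>k\<in>A. sqrt (v k) * (x k / sqrt (v k)))\<^sup>2"
    using v by (intro arg_cong[where f = power2] sum.cong) (auto dest: v simp: less_imp_le)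
  also have "\<dots> \<le> (\<Sum>k\<in>A. (sqrt (v k))\<^sup>2) * (\<Sum>k\<in>A. (x k / sqrt (v k))\<^sup>2)"
    by (rule Cauchy_Schwarz_ineq_sum)
  also have "\<dots> = (\<Sum>k\<in>A. v k) * (\<Sum>k\<in>A. (x k)\<^sup>2 / v k)"
    using v by (intro arg_cong2[where f = "(*)"] sum.cong) (auto simp: power_divide less_imp_le)
  finally show ?thesis using assms(2) by (simp add: divide_le_eq mult.commute)
qed

lemma convex_on_powr_nonpos:
  fixes e :: real
  assumes "e \<le> 0"
  shows "convex_on {0<..} (\<lambda>t. t powr e)"
proof (rule f''_ge0_imp_convex[where f' = "\<lambda>t. e * t powr (e - 1)" and f'' = "\<lambda>t. e * (e - 1) * t powr (e - 2)"])
  fix t :: real assume "t \<in> {0<..}"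
  then show "((\<lambda>t. t powr e) has_real_derivative e * t powr (e - 1)) (at t)"
    and "((\<lambda>t. e * t powr (e - 1)) has_real_derivative e * (e - 1) * t powr (e - 2)) (at t)"
    by (auto intro!: derivative_eq_intros simp: algebra_simps)
  show "0 \<le> e * (e - 1) * t powr (e - 2)" using assms by (simp add: mult_nonpos_nonpos)
qed simp

lemma sum_powr_le_powr_sum:
  fixes r :: "'a \<Rightarrow> real"
  assumes fin: "finite P" and rpos: "\<And>k. k \<in> P \<Longrightarrow> r k > 0" and b: "b \<ge> 1"
  shows "(\<Sum>k\<in>P. r k powr b) \<le> (\<Sum>k\<in>P. r k) powr b"
proof (cases "P = {}")
  case False
  define s where "s = (\<Sum>k\<in>P. r k)"
  have "s > 0" unfolding s_def using fin False rpos by (intro sum_pos) auto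
  have "r k powr b \<le> r k * s powr (b - 1)" if "k \<in> P" for k
  proof -
    have "r k \<le> s" unfolding s_def using fin that rpos by (intro member_le_sum) (auto simp: less_imp_le)
    then have "r k * r k powr (b - 1) \<le> r k * s powr (b - 1)"
      using b rpos[OF that] by (intro mult_left_mono powr_mono2) auto
    then show ?thesis using rpos[OF that] by (simp add: powr_diff)
  qed
  then have "(\<Sum>k\<in>P. r k powr b) \<le> (\<Sum>k\<in>P. r k * s powr (b - 1))" by (rule sum_mono)
  also have "\<dots> = s * s powr (b - 1)" by (simp add: s_def sum_distrib_right)
  also have "\<dots> = s powr b" using \<open>s > 0\<close> by (simp add: powr_diff)
  finally show ?thesis by (simp add: s_def)
qed simp

lemma sum_powr_le_card_powr_sum:
  fixes r :: "'a \<Rightarrow> real"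
  assumes fin: "finite P" and ne: "P \<noteq> {}" and rpos: "\<And>k. k \<in> P \<Longrightarrow> r k > 0"
    and b: "0 \<le> b" "b \<le> 1"
  shows "(\<Sum>k\<in>P. r k powr b) \<le> real (card P) powr (1 - b) * (\<Sum>k\<in>P. r k) powr b"
proof -
  define m where "m = real (card P)"
  define s where "s = (\<Sum>k\<in>P. r k)"
  have "m > 0" using fin ne by (simp add: m_def card_gt_0_iff)
  have "s > 0" unfolding s_def using rpos by (intro sum_pos[OF fin ne])
  define t where "t = s / m"
  have "t > 0" using \<open>m > 0\<close> \<open>s > 0\<close> by (simp add: t_def)
  have "(\<Sum>k\<in>P. r k powr b) * t powr (1 - b) = (\<Sum>k\<in>P. r k powr b * t powr (1 - b))"
    by (simp add: sum_distrib_right)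
  also have "\<dots> \<le> (\<Sum>k\<in>P. b * r k + (1 - b) * t)"
    using Youngs_inequality_0[of b "1 - b" "r _" t] b \<open>t > 0\<close> rpos
    by (intro sum_mono) (simp add: less_imp_le)
  also have "\<dots> = b * s + (1 - b) * (m * t)"
    by (simp add: sum.distrib sum_distrib_left s_def m_def)
  also have "\<dots> = s" using \<open>m > 0\<close> by (simp add: t_def algebra_simps)
  finally have "(\<Sum>k\<in>P. r k powr b) \<le> s / t powr (1 - b)"
    using \<open>t > 0\<close> by (simp add: pos_le_divide_eq)
  also have "s / t powr (1 - b) = m powr (1 - b) * s powr b"
    using \<open>m > 0\<close> \<open>s > 0\<close> by (simp add: t_def powr_divide powr_diff)
  finally show ?thesis by (simp add: m_def s_def)
qed

lemma radon_inequality: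
  fixes U V x y b :: real
  assumes "U > 0" "V > 0" "x > 0" "y > 0" "b \<ge> 0"
  shows "(U + V) powr (1 + b) / (x + y) powr b \<le> U powr (1 + b) / x powr b + V powr (1 + b) / y powr b"
proof -
  have scale: "z * (W / z) powr (1 + b) = W powr (1 + b) / z powr b" if "z > 0" for z W :: real
    using that by (simp add: powr_divide powr_add)
  have "((1 - y / (x + y)) *\<^sub>R (U / x) + (y / (x + y)) *\<^sub>R (V / y)) powr (1 + b)
      \<le> (1 - y / (x + y)) * (U / x) powr (1 + b) + (y / (x + y)) * (V / y) powr (1 + b)"
    using assms by (intro convex_onD[OF powr_convex]) auto
  moreover have "1 - y / (x + y) = x / (x + y)" using assms by (simp add: field_simps)
  ultimately have "((U + V) / (x + y)) powr (1 + b)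
      \<le> x / (x + y) * (U / x) powr (1 + b) + y / (x + y) * (V / y) powr (1 + b)"
    using assms by (simp add: add_divide_distrib)
  then have "(x + y) * ((U + V) / (x + y)) powr (1 + b)
      \<le> (x + y) * (x / (x + y) * (U / x) powr (1 + b) + y / (x + y) * (V / y) powr (1 + b))"
    using assms by (intro mult_left_mono) auto
  also have "\<dots> = x * (U / x) powr (1 + b) + y * (V / y) powr (1 + b)"
    using assms by (simp add: distrib_left)
  finally show ?thesis using assms by (simp add: scale)
qed

lemma convex_on_inner_pair_le_outer_pair:
  fixes f :: "real \<Rightarrow> real"
  assumes cv: "convex_on A f" and xw: "x \<in> A" "w \<in> A"
    and "x \<le> y" "y \<le> z" "z \<le> w" and sum: "x + w = y + z"
  shows "f y + f z \<le> f x + f w"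
proof (cases "x = w")
  case True
  then have "y = x" "z = w" using assms by auto
  then show ?thesis by simp
next
  case False
  define t where "t = (y - x) / (w - x)"
  have "x < w" using False assms by simp
  then have t: "0 \<le> t" "t \<le> 1" "t * (w - x) = y - x"
    using assms by (auto simp: t_def divide_le_eq_1_pos)
  have yz: "y = (1 - t) *\<^sub>R x + t *\<^sub>R w" "z = (1 - (1 - t)) *\<^sub>R x + (1 - t) *\<^sub>R w"
    using t(3) sum by (simp_all add: algebra_simps)
  have "f y \<le> (1 - t) * f x + t * f w"
    unfolding yz(1) using t by (intro convex_onD[OF cv _ _ xw]) auto
  moreover have "f z \<le> (1 - (1 - t)) * f x + (1 - t) * f w"
    unfolding yz(2) using t by (intro convex_onD[OF cv _ _ xw]) auto
  ultimately show ?thesis by (simp add: algebra_simps)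
qed

lemma balanced_split_powr_le:
  fixes e :: real and m n K :: nat
  assumes e: "e \<le> 0" and "m \<ge> 1" "n \<ge> 1" "m + n \<le> K"
  shows "real (K div 2) powr e + real (K - K div 2) powr e \<le> real m powr e + real n powr e"
proof -
  have ordered: "real (K div 2) powr e + real (K - K div 2) powr e \<le> real i powr e + real j powr e"
    if "1 \<le> i" "i \<le> j" "i + j \<le> K" for i j
  proof -
    have "i \<le> K div 2" using that by linarith
    then have "real (K div 2) powr e + real (K - K div 2) powr e \<le> real i powr e + real (K - i) powr e"
      using that by (intro convex_on_inner_pair_le_outer_pair[OF convex_on_powr_nonpos[OF e]])
        (auto simp: of_nat_diff)
    also have "real (K - i) powr e \<le> real j powr e"
      using that e by (intro powr_mono2') auto
    finally show ?thesis by simp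
  qed
  show ?thesis
    using ordered[of m n] ordered[of n m] assms by (cases "m \<le> n") (auto simp: add.commute)
qed

lemma two_mul_half_powr: "2 * (1 / 2 :: real) powr (a - 2) = 4 * 2 powr (1 - a)"
  by (simp add: powr_divide powr_diff)

lemma sum_lessThan_split_two:
  fixes f :: "nat \<Rightarrow> real"
  assumes "K \<ge> 2"
  shows "(\<Sum>k<K. f k) = f 0 + f 1 + (\<Sum>k\<in>{2..<K}. f k)"
proof -
  have "{..<K} = {0, 1} \<union> {2..<K}" using assms by auto
  then show ?thesis by (simp add: sum.union_disjoint)
qed

lemma sum_lessThan_if_less:
  fixes \<alpha> \<beta> :: real
  assumes "M \<le> K"
  shows "(\<Sum>k<K. if k < M then \<alpha> else \<beta>) = real M * \<alpha> + real (K - M) * \<beta>"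
proof -
  have "{..<K} \<inter> {k. k < M} = {..<M}" "{..<K} \<inter> - {k. k < M} = {M..<K}" using assms by auto
  then show ?thesis by (simp add: sum.If_cases)
qed

lemma sum_lessThan_split_sign:
  fixes x f :: "nat \<Rightarrow> real"
  assumes "\<And>k. x k = 0 \<Longrightarrow> f k = 0"
  shows "(\<Sum>k<K. f k) = (\<Sum>k\<in>{k\<in>{..<K}. 0 < x k}. f k) + (\<Sum>k\<in>{k\<in>{..<K}. x k < 0}. f k)"
proof -
  have "(\<Sum>k<K. f k) = (\<Sum>k\<in>{k\<in>{..<K}. 0 < x k} \<union> {k\<in>{..<K}. x k < 0}. f k)"
    using assms by (intro sum.mono_neutral_right) (auto, metis less_linear)
  then show ?thesis by (subst (asm) sum.union_disjoint) auto
qed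

lemma segment_in_relint_simplex:
  assumes p: "p \<in> relint_simplex K" and q: "q \<in> relint_simplex K" and s: "0 \<le> s" "s \<le> 1"
  shows "(\<lambda>k. q k + s * (p k - q k)) \<in> relint_simplex K"
proof -
  have convex_pos: "0 < (1 - s) * u + s * v" if "0 < u" "0 < v" for u v :: real
    using s that by (cases "s = 0") (auto intro: add_nonneg_pos)
  have "0 < q k + s * (p k - q k) \<and> q k + s * (p k - q k) < 1" if "k < K" for k
    using convex_pos[of "q k" "p k"] convex_pos[of "1 - q k" "1 - p k"] p q that
    by (auto simp: relint_simplex_def algebra_simps)
  moreover have "(\<Sum>k<K. q k + s * (p k - q k)) = 1"
    using p q by (simp add: relint_simplex_def sum.distrib sum_subtractf sum_distrib_left[symmetric])
  ultimately show ?thesis by (simp add: relint_simplex_def)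
qed

lemma eventually_perturbation_in_relint_simplex:
  assumes r: "r \<in> relint_simplex K" and sx: "(\<Sum>k<K. x k) = 0"
  shows "\<forall>\<^sub>F s in at_right 0. (\<lambda>k. r k + s * x k) \<in> relint_simplex K"
proof -
  have lim: "((\<lambda>s. r k + s * x k) \<longlongrightarrow> r k) (at_right 0)" for k
    by (auto intro!: tendsto_eq_intros)
  have sums: "(\<Sum>k<K. r k + s * x k) = 1" for s
    using r sx by (simp add: relint_simplex_def sum.distrib sum_distrib_left[symmetric])
  have "\<forall>\<^sub>F s in at_right 0. \<forall>k\<in>{..<K}. 0 < r k + s * x k \<and> r k + s * x k < 1"
    using r by (intro eventually_ball_finite ballI eventually_conj order_tendstoD[OF lim])
      (auto simp: relint_simplex_def)
  then show ?thesis by eventually_elim (simp add: relint_simplex_def sums)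
qed

lemma mem_relint_simplex_iff:
  assumes "K \<ge> 2"
  shows "r \<in> relint_simplex K \<longleftrightarrow> (\<forall>k<K. 0 < r k) \<and> (\<Sum>k<K. r k) = 1"
proof -
  have "r k < 1" if pos: "\<forall>k<K. 0 < r k" and r1: "(\<Sum>k<K. r k) = 1" and "k < K" for k
  proof -
    have "(if k = 0 then 1 else 0) \<in> {..<K} - {k}" using assms \<open>k < K\<close> by auto
    then have "{..<K} - {k} \<noteq> {}" by blast
    then have "0 < (\<Sum>j\<in>{..<K} - {k}. r j)" using pos by (intro sum_pos) auto
    moreover have "(\<Sum>k<K. r k) = r k + (\<Sum>j\<in>{..<K} - {k}. r j)"
      using \<open>k < K\<close> by (simp add: sum.remove)
    ultimately show ?thesis using r1 by simp
  qed
  then show ?thesis by (auto simp: relint_simplex_def)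
qed

lemma masses_of_disjoint_subsets:
  fixes r :: "nat \<Rightarrow> real"
  assumes rpos: "\<And>k. k < K \<Longrightarrow> r k > 0" and r1: "(\<Sum>k<K. r k) = 1"
    and PN: "P \<subseteq> {..<K}" "N \<subseteq> {..<K}" "P \<inter> N = {}" "P \<noteq> {}" "N \<noteq> {}"
  shows "(\<Sum>k\<in>P. r k) > 0" "(\<Sum>k\<in>N. r k) > 0" "(\<Sum>k\<in>P. r k) + (\<Sum>k\<in>N. r k) \<le> 1"
proof -
  have fin: "finite P" "finite N" using PN finite_subset by blast+
  show "(\<Sum>k\<in>P. r k) > 0" "(\<Sum>k\<in>N. r k) > 0"
    using fin PN rpos by (auto intro!: sum_pos)
  have "(\<Sum>k\<in>P. r k) + (\<Sum>k\<in>N. r k) = (\<Sum>k\<in>P \<union> N. r k)"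
    using fin PN by (simp add: sum.union_disjoint)
  also have "\<dots> \<le> (\<Sum>k<K. r k)"
    using PN rpos by (intro sum_mono2) (auto simp: less_imp_le)
  finally show "(\<Sum>k\<in>P. r k) + (\<Sum>k\<in>N. r k) \<le> 1" using r1 by simp
qed

section \<open>Strong convexity as a bound on the Hessian\<close>

definition phi :: "real \<Rightarrow> real \<Rightarrow> real" where
  "phi a t = (if a = 0 then - ln t else if a = 1 then t * ln t else - (t powr a) / (a * (1 - a)))"

definition phi_deriv :: "real \<Rightarrow> real \<Rightarrow> real" where
  "phi_deriv a t = (if a = 0 then - (1 / t) else if a = 1 then ln t + 1 else t powr (a - 1) / (a - 1))"

lemma neg_S_eq_sum_phi: "- S K a p = (\<Sum>k<K. phi a (p k))"
  unfolding S_def phi_def by (auto simp: sum_negf sum_divide_distrib)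

lemma has_real_derivative_phi:
  assumes "t > 0"
  shows "(phi a has_real_derivative phi_deriv a t) (at t)"
proof -
  consider "a = 0" | "a = 1" | "a \<noteq> 0" "a \<noteq> 1" by blast
  then show ?thesis
  proof cases
    case 1
    then show ?thesis unfolding phi_def phi_deriv_def
      using assms by (auto intro!: derivative_eq_intros)
  next
    case 2
    then have "phi a = (\<lambda>t. t * ln t)" by (simp add: phi_def fun_eq_iff)
    then show ?thesis using 2 assms unfolding phi_deriv_def by (auto intro!: derivative_eq_intros)
  next
    case 3
    have "((\<lambda>t. - (t powr a) / (a * (1 - a))) has_real_derivative
        - (a * t powr (a - 1)) / (a * (1 - a))) (at t)"
      using assms 3 by (auto intro!: derivative_eq_intros)
    moreover have "- (a * t powr (a - 1)) / (a * (1 - a)) = t powr (a - 1) / (a - 1)"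
      using 3 by (simp add: field_simps)
    ultimately show ?thesis using 3 unfolding phi_def phi_deriv_def by simp
  qed
qed

lemma has_real_derivative_phi_deriv:
  assumes "t > 0"
  shows "(phi_deriv a has_real_derivative t powr (a - 2)) (at t)"
proof -
  consider "a = 0" | "a = 1" | "a \<noteq> 0" "a \<noteq> 1" by blast
  then show ?thesis
  proof cases
    case 1
    have "((\<lambda>t. - (1 / t)) has_real_derivative 1 / t\<^sup>2) (at t)"
      using assms by (auto intro!: derivative_eq_intros simp: power2_eq_square)
    then show ?thesis using 1 assms unfolding phi_deriv_def
      by (simp add: powr_minus powr_realpow divide_inverse)
  next
    case 2
    have "((\<lambda>t. ln t + 1) has_real_derivative 1 / t) (at t)"
      using assms by (auto intro!: derivative_eq_intros)
    then show ?thesis using 2 assms unfolding phi_deriv_def by (simp add: powr_minus divide_inverse)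
  next
    case 3
    have "((\<lambda>t. t powr (a - 1) / (a - 1)) has_real_derivative
        (a - 1) * t powr (a - 1 - 1) / (a - 1)) (at t)"
      using assms by (auto intro!: derivative_eq_intros)
    then show ?thesis using 3 unfolding phi_deriv_def by simp
  qed
qed

lemma grad_neg_S:
  assumes "k < K" "q k > 0"
  shows "grad (\<lambda>p. - S K a p) q k = phi_deriv a (q k)"
proof -
  have "(\<lambda>t. - S K a (q(k := t))) = (\<lambda>t. phi a t + (\<Sum>j\<in>{..<K} - {k}. phi a (q j)))"
    using assms(1) by (simp add: neg_S_eq_sum_phi sum.remove[of _ k] fun_eq_iff)
  moreover have "((\<lambda>t. phi a t + (\<Sum>j\<in>{..<K} - {k}. phi a (q j)))
      has_real_derivative phi_deriv a (q k)) (at (q k))"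
    using has_real_derivative_phi[OF assms(2)] by (auto intro!: derivative_eq_intros)
  ultimately show ?thesis unfolding grad_def by (simp add: DERIV_imp_deriv)
qed

definition hessian_form :: "nat \<Rightarrow> real \<Rightarrow> (nat \<Rightarrow> real) \<Rightarrow> (nat \<Rightarrow> real) \<Rightarrow> real" where
  "hessian_form K a r x = (\<Sum>k<K. r k powr (a - 2) * (x k)\<^sup>2)"

definition hessian_bound :: "nat \<Rightarrow> real \<Rightarrow> real \<Rightarrow> bool" where
  "hessian_bound K a c \<longleftrightarrow>
     (\<forall>r\<in>relint_simplex K. \<forall>x. (\<Sum>k<K. x k) = 0 \<longrightarrow> c * (norm1 K x)\<^sup>2 \<le> hessian_form K a r x)"

lemma neg_S_segment_taylor:
  fixes q x :: "nat \<Rightarrow> real"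
  assumes "h > 0" and pos: "\<And>s k. 0 \<le> s \<Longrightarrow> s \<le> h \<Longrightarrow> k < K \<Longrightarrow> q k + s * x k > 0"
  shows "\<exists>t. 0 < t \<and> t < h \<and>
    - S K a (\<lambda>k. q k + h * x k) = - S K a q + h * (\<Sum>k<K. grad (\<lambda>p. - S K a p) q k * x k)
      + h\<^sup>2 / 2 * hessian_form K a (\<lambda>k. q k + t * x k) x"
proof -
  define F :: "nat \<Rightarrow> real \<Rightarrow> real" where
    "F m s = (if m = 0 then \<Sum>k<K. phi a (q k + s * x k)
              else if m = 1 then \<Sum>k<K. phi_deriv a (q k + s * x k) * x k
              else hessian_form K a (\<lambda>k. q k + s * x k) x)" for m s
  have "(F m has_real_derivative F (Suc m) s) (at s)" if "m < 2" "0 \<le> s" "s \<le> h" for m s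
  proof -
    have chain: "((\<lambda>s. q k + s * x k) has_real_derivative x k) (at s)" for k
      by (auto intro!: derivative_eq_intros)
    consider "m = 0" | "m = 1" using \<open>m < 2\<close> by linarith
    then show ?thesis
    proof cases
      case 1
      have "((\<lambda>s. \<Sum>k<K. phi a (q k + s * x k)) has_real_derivative
          (\<Sum>k<K. phi_deriv a (q k + s * x k) * x k)) (at s)"
        using pos[OF that(2,3)] by (intro DERIV_sum DERIV_chain2[OF has_real_derivative_phi chain]) auto
      then show ?thesis using 1 by (simp add: F_def[abs_def])
    next
      case 2
      have "((\<lambda>s. \<Sum>k<K. phi_deriv a (q k + s * x k) * x k) has_real_derivative
          (\<Sum>k<K. (q k + s * x k) powr (a - 2) * x k * x k)) (at s)"
        using pos[OF that(2,3)]
        by (intro DERIV_sum DERIV_cmult_right DERIV_chain2[OF has_real_derivative_phi_deriv chain]) auto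
      then show ?thesis using 2
        by (simp add: F_def[abs_def] hessian_form_def power2_eq_square mult.assoc)
    qed
  qed
  then obtain t where t: "0 < t" "t < h"
    and F: "F 0 h = (\<Sum>m<2. F m 0 / fact m * h ^ m) + F 2 t / fact 2 * h ^ 2"
    using Maclaurin[OF \<open>h > 0\<close>, of 2 F] by auto
  have "(\<Sum>k<K. grad (\<lambda>p. - S K a p) q k * x k) = (\<Sum>k<K. phi_deriv a (q k) * x k)"
    using pos[of 0] \<open>h > 0\<close> by (intro sum.cong) (auto simp: grad_neg_S)
  then show ?thesis
    using t F by (intro exI[of _ t]) (simp add: F_def neg_S_eq_sum_phi numeral_2_eq_2 mult.commute)
qed

lemma tendsto_hessian_form_perturbation:
  assumes "\<And>k. k < K \<Longrightarrow> r k > 0"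
  shows "((\<lambda>s. hessian_form K a (\<lambda>k. r k + s * x k) x) \<longlongrightarrow> hessian_form K a r x) (at_right 0)"
  unfolding hessian_form_def using assms
  by (intro tendsto_sum tendsto_mult tendsto_powr tendsto_const) (auto intro!: tendsto_eq_intros dest: assms)

lemma strongly_convex_relint_if_hessian_bound:
  assumes "hessian_bound K a c"
  shows "strongly_convex_relint K (\<lambda>p. - S K a p) c"
  unfolding strongly_convex_relint_def
proof (intro ballI)
  fix p q assume p: "p \<in> relint_simplex K" and q: "q \<in> relint_simplex K"
  define x where "x k = p k - q k" for k
  have "q k + s * x k > 0" if "0 \<le> s" "s \<le> 1" "k < K" for s k
    using segment_in_relint_simplex[OF p q that(1,2)] that(3) by (simp add: x_def relint_simplex_def)
  then obtain t where t: "0 < t" "t < 1" and taylor: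
    "- S K a (\<lambda>k. q k + 1 * x k) = - S K a q + 1 * (\<Sum>k<K. grad (\<lambda>p. - S K a p) q k * x k)
      + 1\<^sup>2 / 2 * hessian_form K a (\<lambda>k. q k + t * x k) x"
    using neg_S_segment_taylor[of 1 K q x a] by auto
  have "(\<lambda>k. q k + t * x k) \<in> relint_simplex K"
    using segment_in_relint_simplex[OF p q] t by (simp add: x_def)
  moreover have "(\<Sum>k<K. x k) = 0"
    using p q by (simp add: x_def sum_subtractf relint_simplex_def)
  ultimately have "c * (norm1 K x)\<^sup>2 \<le> hessian_form K a (\<lambda>k. q k + t * x k) x"
    using assms unfolding hessian_bound_def by blast
  then show "- S K a q + (\<Sum>k<K. grad (\<lambda>p. - S K a p) q k * (p k - q k))
      + c / 2 * (norm1 K (\<lambda>k. p k - q k))\<^sup>2 \<le> - S K a p"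
    using taylor by (simp add: x_def[abs_def])
qed

lemma hessian_bound_if_strongly_convex_relint:
  assumes sc: "strongly_convex_relint K (\<lambda>p. - S K a p) c"
  shows "hessian_bound K a c"
  unfolding hessian_bound_def
proof (intro ballI allI impI)
  fix r x :: "nat \<Rightarrow> real" assume r: "r \<in> relint_simplex K" and sx: "(\<Sum>k<K. x k) = 0"
  define N where "N = norm1 K x"
  have rpos: "\<And>k. k < K \<Longrightarrow> r k > 0" using r by (simp add: relint_simplex_def)
  show "c * N\<^sup>2 \<le> hessian_form K a r x"
  proof (rule ccontr)
    assume "\<not> c * N\<^sup>2 \<le> hessian_form K a r x"
    then have "\<forall>\<^sub>F s in at_right 0. hessian_form K a (\<lambda>k. r k + s * x k) x < c * N\<^sup>2"
      using order_tendstoD(2)[OF tendsto_hessian_form_perturbation[OF rpos]] by simp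
    with eventually_perturbation_in_relint_simplex[OF r sx]
    have "\<forall>\<^sub>F s in at_right 0. (\<lambda>k. r k + s * x k) \<in> relint_simplex K
        \<and> hessian_form K a (\<lambda>k. r k + s * x k) x < c * N\<^sup>2"
      by eventually_elim auto
    then obtain b where "b > 0" and b: "\<And>s. 0 < s \<Longrightarrow> s < b \<Longrightarrow> (\<lambda>k. r k + s * x k) \<in> relint_simplex K
        \<and> hessian_form K a (\<lambda>k. r k + s * x k) x < c * N\<^sup>2"
      unfolding eventually_at_right_field by auto
    define h where "h = b / 2"
    have h: "0 < h" "h < b" using \<open>b > 0\<close> by (auto simp: h_def)
    have "r k + s * x k > 0" if "0 \<le> s" "s \<le> h" "k < K" for s k
      using b[of s] rpos[of k] that h by (cases "s = 0") (auto simp: relint_simplex_def)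
    then obtain t where t: "0 < t" "t < h" and taylor:
      "- S K a (\<lambda>k. r k + h * x k) = - S K a r + h * (\<Sum>k<K. grad (\<lambda>p. - S K a p) r k * x k)
        + h\<^sup>2 / 2 * hessian_form K a (\<lambda>k. r k + t * x k) x"
      using neg_S_segment_taylor[OF \<open>h > 0\<close>] by blast
    have "- S K a r + (\<Sum>k<K. grad (\<lambda>p. - S K a p) r k * (h * x k))
        + c / 2 * (norm1 K (\<lambda>k. h * x k))\<^sup>2 \<le> - S K a (\<lambda>k. r k + h * x k)"
      using sc r b[OF h] unfolding strongly_convex_relint_def by fastforce
    moreover have "norm1 K (\<lambda>k. h * x k) = h * N"
      using h by (simp add: norm1_def N_def abs_mult sum_distrib_left)
    moreover have "h\<^sup>2 / 2 * hessian_form K a (\<lambda>k. r k + t * x k) x < h\<^sup>2 / 2 * (c * N\<^sup>2)"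
      using b[of t] t h by simp
    ultimately show False
      using taylor by (simp add: sum_distrib_left power_mult_distrib algebra_simps)
  qed
qed

lemma strongly_convex_relint_neg_S_iff:
  "strongly_convex_relint K (\<lambda>p. - S K a p) c \<longleftrightarrow> hessian_bound K a c"
  using strongly_convex_relint_if_hessian_bound hessian_bound_if_strongly_convex_relint by blast

section \<open>Lower bounds for the Hessian form\<close>

lemma hessian_form_ge_if_pair_bound:
  fixes r x :: "nat \<Rightarrow> real"
  assumes rpos: "\<And>k. k < K \<Longrightarrow> r k > 0" and sx: "(\<Sum>k<K. x k) = 0"
    and pair: "\<And>P N. P \<subseteq> {..<K} \<Longrightarrow> N \<subseteq> {..<K} \<Longrightarrow> P \<inter> N = {} \<Longrightarrow> P \<noteq> {} \<Longrightarrow> N \<noteq> {} \<Longrightarrow>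
        4 * c \<le> 1 / (\<Sum>k\<in>P. r k powr (2 - a)) + 1 / (\<Sum>k\<in>N. r k powr (2 - a))"
  shows "c * (norm1 K x)\<^sup>2 \<le> hessian_form K a r x"
proof -
  define P where "P = {k\<in>{..<K}. 0 < x k}"
  define N where "N = {k\<in>{..<K}. x k < 0}"
  define v where "v k = r k powr (2 - a)" for k
  define s where "s = (\<Sum>k\<in>P. x k)"
  have PN: "P \<subseteq> {..<K}" "N \<subseteq> {..<K}" "P \<inter> N = {}" by (auto simp: P_def N_def)
  have split: "(\<Sum>k<K. f k) = (\<Sum>k\<in>P. f k) + (\<Sum>k\<in>N. f k)"
    if "\<And>k. x k = 0 \<Longrightarrow> f k = 0" for f :: "nat \<Rightarrow> real"
    unfolding P_def N_def using that by (rule sum_lessThan_split_sign)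
  have sN: "(\<Sum>k\<in>N. x k) = - s" using split[of x] sx by (simp add: s_def)
  have "norm1 K x = (\<Sum>k\<in>P. x k) - (\<Sum>k\<in>N. x k)"
    unfolding norm1_def by (subst split) (simp_all add: P_def N_def sum_negf[symmetric])
  then have norm: "norm1 K x = 2 * s" using sN by (simp add: s_def)
  have hess: "hessian_form K a r x = (\<Sum>k\<in>P. (x k)\<^sup>2 / v k) + (\<Sum>k\<in>N. (x k)\<^sup>2 / v k)"
  proof -
    have "hessian_form K a r x = (\<Sum>k<K. (x k)\<^sup>2 / v k)"
      unfolding hessian_form_def v_def using rpos
      by (intro sum.cong) (simp_all add: divide_inverse powr_minus[symmetric])
    then show ?thesis by (simp add: split)
  qed
  have vpos: "v k > 0" if "k < K" for k using rpos[OF that] by (simp add: v_def)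
  show ?thesis
  proof (cases "P = {} \<or> N = {}")
    case True
    then have "s = 0" using sN by (auto simp: s_def)
    moreover have "0 \<le> hessian_form K a r x" unfolding hessian_form_def by (intro sum_nonneg) simp
    ultimately show ?thesis using norm by simp
  next
    case False
    have sum_v_pos: "(\<Sum>k\<in>P. v k) > 0" "(\<Sum>k\<in>N. v k) > 0"
      using False PN vpos by (auto intro!: sum_pos simp: P_def N_def)
    have "c * (norm1 K x)\<^sup>2 = s\<^sup>2 * (4 * c)" by (simp add: norm power2_eq_square)
    also have "\<dots> \<le> s\<^sup>2 * (1 / (\<Sum>k\<in>P. v k) + 1 / (\<Sum>k\<in>N. v k))"
      using pair[OF PN] False by (intro mult_left_mono) (simp_all add: v_def)
    also have "\<dots> = (\<Sum>k\<in>P. x k)\<^sup>2 / (\<Sum>k\<in>P. v k) + (\<Sum>k\<in>N. x k)\<^sup>2 / (\<Sum>k\<in>N. v k)"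
      by (simp add: s_def sN field_simps)
    also have "\<dots> \<le> hessian_form K a r x"
      unfolding hess using PN vpos sum_v_pos
      by (intro add_mono Cauchy_Schwarz_ineq_sum_div) auto
    finally show ?thesis .
  qed
qed

lemma pair_bound_small_alpha:
  fixes r :: "nat \<Rightarrow> real"
  assumes a: "a \<le> 1" and rpos: "\<And>k. k < K \<Longrightarrow> r k > 0" and r1: "(\<Sum>k<K. r k) = 1"
    and PN: "P \<subseteq> {..<K}" "N \<subseteq> {..<K}" "P \<inter> N = {}" "P \<noteq> {}" "N \<noteq> {}"
  shows "4 * 2 powr (1 - a) \<le> 1 / (\<Sum>k\<in>P. r k powr (2 - a)) + 1 / (\<Sum>k\<in>N. r k powr (2 - a))"
proof -
  define b where "b = 2 - a"
  define x where "x = (\<Sum>k\<in>P. r k)"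
  define y where "y = (\<Sum>k\<in>N. r k)"
  have xy: "x > 0" "y > 0" "x + y \<le> 1"
    unfolding x_def y_def using masses_of_disjoint_subsets[OF rpos r1 PN] by auto
  have recip: "z powr (- b) \<le> 1 / (\<Sum>k\<in>A. r k powr b)"
    if "A \<subseteq> {..<K}" "A \<noteq> {}" "z = (\<Sum>k\<in>A. r k)" for A z
  proof -
    have "finite A" and rA: "\<And>k. k \<in> A \<Longrightarrow> r k > 0"
      using that(1) rpos finite_subset by blast+
    then have "0 < (\<Sum>k\<in>A. r k powr b)" "(\<Sum>k\<in>A. r k powr b) \<le> z powr b"
      using that a by (auto intro!: sum_pos sum_powr_le_powr_sum dest: rA simp: b_def)
    then show ?thesis by (simp add: powr_minus divide_inverse le_imp_inverse_le)
  qed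
  have "2 * 2 powr b = 2 * (1 / 2) powr (- b)" by (simp add: powr_minus_divide powr_divide)
  also have "\<dots> \<le> 2 * ((x + y) / 2) powr (- b)"
    using xy a by (intro mult_left_mono powr_mono2') (auto simp: b_def)
  also have "\<dots> \<le> x powr (- b) + y powr (- b)"
    using convex_onD[OF convex_on_powr_nonpos[of "- b"], of "1 / 2" x y] xy a
    by (simp add: b_def add_divide_distrib)
  also have "\<dots> \<le> 1 / (\<Sum>k\<in>P. r k powr b) + 1 / (\<Sum>k\<in>N. r k powr b)"
    using PN by (intro add_mono recip) (auto simp: x_def y_def)
  finally show ?thesis by (simp add: b_def powr_diff)
qed

lemma balanced_split_powr_sum_eq_C:
  fixes a :: real and K :: nat
  assumes a: "1 < a" "a \<le> 2" and K: "K \<ge> 2"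
  shows "(real (K div 2) powr ((1 - a) / (3 - a)) + real (K - K div 2) powr ((1 - a) / (3 - a)))
      powr (3 - a) = 4 * C a K"
proof -
  define e where "e = (1 - a) / (3 - a)"
  define d where "d = (if even K then 0 else 1 / real K)"
  define M where "M = ((1 - d) powr e + (1 + d) powr e) / 2"
  have d: "0 \<le> d" "d < 1" using K by (auto simp: d_def)
  have halves: "real (K div 2) = real K / 2 * (1 - d)" "real (K - K div 2) = real K / 2 * (1 + d)"
    using K by (cases "even K") (auto elim!: evenE oddE simp: d_def field_simps)
  have "M > 0" using d by (simp add: M_def add_nonneg_pos)
  have "real (K div 2) powr e + real (K - K div 2) powr e = (real K / 2) powr e * (2 * M)"
    unfolding halves using d by (subst (1 2) powr_mult) (simp_all add: M_def algebra_simps)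
  moreover have "((real K / 2) powr e * (2 * M)) powr (3 - a)
      = real K powr (1 - a) * (2 powr (3 - a) / 2 powr (1 - a)) * M powr (3 - a)"
    using a \<open>M > 0\<close> by (simp add: powr_mult powr_powr powr_divide e_def)
  moreover have "(2::real) powr (3 - a) / 2 powr (1 - a) = 4"
    by (simp add: powr_diff[symmetric])
  moreover have "C a K = real K powr (1 - a) * M powr (3 - a)"
    using a by (simp add: C_def M_def d_def e_def)
  ultimately show ?thesis by (simp add: e_def)
qed

lemma four_C_le_split_powr_sum:
  fixes a :: real and m n K :: nat
  assumes a: "1 < a" "a \<le> 2" and "m \<ge> 1" "n \<ge> 1" "m + n \<le> K"
  shows "4 * C a K \<le> (real m powr ((1 - a) / (3 - a)) + real n powr ((1 - a) / (3 - a))) powr (3 - a)"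
proof -
  have "K \<ge> 2" using assms by linarith
  then have "4 * C a K = (real (K div 2) powr ((1 - a) / (3 - a)) + real (K - K div 2) powr ((1 - a) / (3 - a)))
      powr (3 - a)"
    using balanced_split_powr_sum_eq_C[OF a] by simp
  also have "\<dots> \<le> (real m powr ((1 - a) / (3 - a)) + real n powr ((1 - a) / (3 - a))) powr (3 - a)"
    using assms by (intro powr_mono2 balanced_split_powr_le) (auto simp: divide_nonpos_pos)
  finally show ?thesis .
qed

lemma pair_bound_medium_alpha:
  fixes r :: "nat \<Rightarrow> real"
  assumes a: "1 < a" "a \<le> 2" and K: "K \<ge> 2"
    and rpos: "\<And>k. k < K \<Longrightarrow> r k > 0" and r1: "(\<Sum>k<K. r k) = 1"
    and PN: "P \<subseteq> {..<K}" "N \<subseteq> {..<K}" "P \<inter> N = {}" "P \<noteq> {}" "N \<noteq> {}"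
  shows "4 * C a K \<le> 1 / (\<Sum>k\<in>P. r k powr (2 - a)) + 1 / (\<Sum>k\<in>N. r k powr (2 - a))"
proof -
  define b where "b = 2 - a"
  define e where "e = (1 - a) / (3 - a)"
  define U where "U = real (card P) powr e"
  define V where "V = real (card N) powr e"
  define x where "x = (\<Sum>k\<in>P. r k)"
  define y where "y = (\<Sum>k\<in>N. r k)"
  have b: "0 \<le> b" "b \<le> 1" using a by (auto simp: b_def)
  have xy: "x > 0" "y > 0" "x + y \<le> 1"
    unfolding x_def y_def using masses_of_disjoint_subsets[OF rpos r1 PN] by auto
  have fin: "finite P" "finite N" using PN finite_subset by blast+
  have UV: "U > 0" "V > 0" using fin PN by (auto simp: U_def V_def card_gt_0_iff)
  have recip: "(real (card A) powr e) powr (1 + b) / z powr b \<le> 1 / (\<Sum>k\<in>A. r k powr b)"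
    if "A \<subseteq> {..<K}" "A \<noteq> {}" "z = (\<Sum>k\<in>A. r k)" for A z
  proof -
    have "finite A" and rA: "\<And>k. k \<in> A \<Longrightarrow> r k > 0"
      using that(1) rpos finite_subset by blast+
    then have "0 < (\<Sum>k\<in>A. r k powr b)"
      and "(\<Sum>k\<in>A. r k powr b) \<le> real (card A) powr (1 - b) * z powr b"
      using that b by (auto intro!: sum_pos sum_powr_le_card_powr_sum dest: rA)
    moreover have "(real (card A) powr e) powr (1 + b) = 1 / real (card A) powr (1 - b)"
      using a by (simp add: powr_powr e_def b_def powr_minus_divide[symmetric])
    ultimately show ?thesis
      using divide_left_mono[of "\<Sum>k\<in>A. r k powr b" "real (card A) powr (1 - b) * z powr b" 1]
      by (simp add: mult_pos_pos)
  qed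
  have "card P + card N \<le> K"
    using PN fin card_mono[of "{..<K}" "P \<union> N"] by (simp add: card_Un_disjoint)
  then have "4 * C a K \<le> (U + V) powr (1 + b)"
    using four_C_le_split_powr_sum[OF a, of "card P" "card N" K] fin PN
    by (simp add: U_def V_def e_def b_def Suc_le_eq card_gt_0_iff)
  also have "\<dots> \<le> (U + V) powr (1 + b) / (x + y) powr b"
    using xy b by (simp add: le_divide_eq powr_le1 mult_left_le)
  also have "\<dots> \<le> U powr (1 + b) / x powr b + V powr (1 + b) / y powr b"
    using UV xy b by (intro radon_inequality) auto
  also have "\<dots> \<le> 1 / (\<Sum>k\<in>P. r k powr b) + 1 / (\<Sum>k\<in>N. r k powr b)"
    unfolding U_def V_def using PN by (intro add_mono recip) (auto simp: x_def y_def)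
  finally show ?thesis by (simp add: b_def)
qed

lemma two_point_bound_large_alpha:
  fixes u v a :: real
  assumes a: "a > 2" and uv: "u > 0" "v > 0" "u + v = 1"
  shows "4 * C a 2 \<le> u powr (a - 2) + v powr (a - 2)"
proof (cases "a \<le> 3")
  case True
  then have "4 * C a 2 = 1" using a by (simp add: C_def max_def powr_minus_divide)
  moreover have "u powr 1 \<le> u powr (a - 2)" "v powr 1 \<le> v powr (a - 2)"
    using True uv by (intro powr_mono'; simp)+
  ultimately show ?thesis using uv by simp
next
  case False
  have "4 * C a 2 = 2 * (1 / 2) powr (a - 2)"
    using False by (simp add: C_def two_mul_half_powr)
  also have "\<dots> \<le> u powr (a - 2) + v powr (a - 2)"
    using convex_onD[OF powr_convex[of "a - 2"], of "1 / 2" u v] False uv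
    by (simp add: add_divide_distrib[symmetric])
  finally show ?thesis .
qed

lemma hessian_bound_C:
  assumes K: "K \<ge> 2"
  shows "hessian_bound K a (C a K)"
  unfolding hessian_bound_def
proof (intro ballI allI impI)
  fix r x :: "nat \<Rightarrow> real" assume "r \<in> relint_simplex K" and sx: "(\<Sum>k<K. x k) = 0"
  then have rpos: "\<And>k. k < K \<Longrightarrow> r k > 0" and r1: "(\<Sum>k<K. r k) = 1"
    by (auto simp: relint_simplex_def)
  consider "a \<le> 1" | "1 < a" "a \<le> 2" | "a > 2" "K = 2" | "a > 2" "K \<noteq> 2" by linarith
  then show "C a K * (norm1 K x)\<^sup>2 \<le> hessian_form K a r x"
  proof cases
    case 1
    show ?thesis
    proof (rule hessian_form_ge_if_pair_bound[OF rpos sx])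
      fix P N assume "P \<subseteq> {..<K}" "N \<subseteq> {..<K}" "P \<inter> N = {}" "P \<noteq> {}" "N \<noteq> {}"
      with pair_bound_small_alpha[OF 1 rpos r1] show "4 * C a K
          \<le> 1 / (\<Sum>k\<in>P. r k powr (2 - a)) + 1 / (\<Sum>k\<in>N. r k powr (2 - a))"
        using 1 by (simp add: C_def)
    qed
  next
    case 2
    with pair_bound_medium_alpha[OF 2 K rpos r1] show ?thesis
      by (intro hessian_form_ge_if_pair_bound[OF rpos sx])
  next
    case 3
    have sum2: "(\<Sum>k<K. f k) = f 0 + f 1" for f :: "nat \<Rightarrow> real"
      using 3 by (simp add: numeral_2_eq_2)
    have "x 1 = - x 0" using sx by (simp add: sum2)
    then have "C a K * (norm1 K x)\<^sup>2 = 4 * C a 2 * (x 0)\<^sup>2"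
      and "hessian_form K a r x = (r 0 powr (a - 2) + r 1 powr (a - 2)) * (x 0)\<^sup>2"
      unfolding norm1_def hessian_form_def sum2 using 3 by (simp_all add: power2_eq_square algebra_simps)
    moreover have "4 * C a 2 \<le> r 0 powr (a - 2) + r 1 powr (a - 2)"
      using rpos 3 r1 sum2[of r] by (intro two_point_bound_large_alpha) auto
    ultimately show ?thesis by (simp add: mult_right_mono)
  next
    case 4
    then show ?thesis by (simp add: C_def hessian_form_def sum_nonneg)
  qed
qed

section \<open>Optimality of the constant\<close>

lemma hessian_bound_two_point:
  fixes u v :: real
  assumes c: "hessian_bound K a c" and K: "K \<ge> 2"
    and uv: "0 < u" "0 < v" "u + v \<le> 1" "K = 2 \<longleftrightarrow> u + v = 1"
  shows "4 * c \<le> u powr (a - 2) + v powr (a - 2)"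
proof -
  \<comment> \<open>For \<open>K = 2\<close> the junk value \<open>w = 0 / 0\<close> is never used.\<close>
  define w where "w = (1 - u - v) / (real K - 2)"
  define r :: "nat \<Rightarrow> real" where "r k = (if k = 0 then u else if k = 1 then v else w)" for k
  define x :: "nat \<Rightarrow> real" where "x k = (if k = 0 then 1 else if k = 1 then -1 else 0)" for k
  have "(\<Sum>k<K. r k) = u + v + real (K - 2) * w"
    by (simp add: sum_lessThan_split_two[OF K] r_def)
  also have "\<dots> = 1"
    using uv K by (cases "K = 2") (auto simp: w_def of_nat_diff)
  finally have "r \<in> relint_simplex K"
    using uv K by (subst mem_relint_simplex_iff) (auto simp: r_def w_def)
  moreover have "(\<Sum>k<K. x k) = 0" "norm1 K x = 2"
    by (simp_all add: norm1_def sum_lessThan_split_two[OF K] x_def)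
  moreover have "hessian_form K a r x = u powr (a - 2) + v powr (a - 2)"
    by (simp add: hessian_form_def sum_lessThan_split_two[OF K] x_def r_def)
  ultimately show ?thesis using c unfolding hessian_bound_def by force
qed

lemma hessian_bound_two_point_limit:
  fixes u v :: "real \<Rightarrow> real"
  assumes c: "hessian_bound K a c" and K: "K \<ge> 2"
    and ev: "\<forall>\<^sub>F t in at_right 0. 0 < u t \<and> 0 < v t \<and> u t + v t \<le> 1 \<and> (K = 2 \<longleftrightarrow> u t + v t = 1)"
    and lim: "((\<lambda>t. u t powr (a - 2) + v t powr (a - 2)) \<longlongrightarrow> L) (at_right 0)"
  shows "4 * c \<le> L"
  using lim by (rule tendsto_lowerbound)
    (use ev in \<open>auto elim!: eventually_mono intro: hessian_bound_two_point[OF c K]\<close>)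

lemma block_hessian_term:
  fixes m T e a :: real
  assumes "m > 0" "T > 0" and e: "(e - 1) * (a - 2) - 1 = e"
  shows "m * ((m powr (e - 1) / T) powr (a - 2) * (1 / m)\<^sup>2) = m powr e * T powr (2 - a)"
proof -
  have "m powr ((e - 1) * (a - 2)) / m = m powr e"
    using assms powr_diff[of m "(e - 1) * (a - 2)" 1] by simp
  moreover have "1 / T powr (a - 2) = T powr (2 - a)"
    by (simp add: powr_minus_divide[symmetric])
  ultimately show ?thesis
    using assms by (simp add: powr_divide powr_powr power2_eq_square field_simps)
qed

lemma hessian_bound_balanced_split:
  assumes c: "hessian_bound K a c" and K: "K \<ge> 2" and a: "a < 3"
  shows "4 * c \<le> (real (K div 2) powr ((1 - a) / (3 - a)) + real (K - K div 2) powr ((1 - a) / (3 - a)))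
      powr (3 - a)"
proof -
  define e where "e = (1 - a) / (3 - a)"
  define M where "M = K div 2"
  define N where "N = K - M"
  define T where "T = real M powr e + real N powr e"
  \<comment> \<open>The equality case of \<open>pair_bound_medium_alpha\<close>: \<open>r\<close> is constant on each half, and the
    halves carry masses \<open>M powr e / T\<close> and \<open>N powr e / T\<close>.\<close>
  define r :: "nat \<Rightarrow> real"
    where "r k = (if k < M then real M powr (e - 1) / T else real N powr (e - 1) / T)" for k
  define x :: "nat \<Rightarrow> real" where "x k = (if k < M then 1 / real M else - 1 / real N)" for k
  have M: "M \<le> K" "real M > 0" "real N > 0" "K - M = N" using K by (auto simp: M_def N_def)
  have "T > 0" using M by (simp add: T_def add_pos_pos)
  have mass: "m * m powr (e - 1) = m powr e" if "m > 0" for m :: real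
    using that by (simp add: powr_diff)
  have e: "(e - 1) * (a - 2) - 1 = e" using a by (simp add: e_def field_simps)
  have "(\<Sum>k<K. r k) = (real M powr e + real N powr e) / T"
    unfolding r_def sum_lessThan_if_less[OF M(1)] using M by (simp add: mass add_divide_distrib)
  then have "r \<in> relint_simplex K"
    using K M \<open>T > 0\<close> by (subst mem_relint_simplex_iff) (auto simp: T_def r_def)
  moreover have "(\<Sum>k<K. x k) = 0" "norm1 K x = 2"
    unfolding norm1_def x_def using M
    by (simp_all add: sum_lessThan_if_less[OF M(1)] if_distrib[of abs] cong: if_cong)
  moreover have "hessian_form K a r x = T * T powr (2 - a)"
  proof -
    have "hessian_form K a r x = (\<Sum>k<K. if k < M
        then (real M powr (e - 1) / T) powr (a - 2) * (1 / real M)\<^sup>2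
        else (real N powr (e - 1) / T) powr (a - 2) * (1 / real N)\<^sup>2)"
      unfolding hessian_form_def r_def x_def by (intro sum.cong) auto
    also have "\<dots> = real M powr e * T powr (2 - a) + real N powr e * T powr (2 - a)"
      unfolding sum_lessThan_if_less[OF M(1)] M(4) using M \<open>T > 0\<close> by (simp add: block_hessian_term[OF _ _ e])
    finally show ?thesis by (simp add: T_def algebra_simps)
  qed
  moreover have "T * T powr (2 - a) = T powr (3 - a)"
    using \<open>T > 0\<close> powr_add[of T 1 "2 - a"] by simp
  ultimately show ?thesis using c unfolding hessian_bound_def T_def M_def N_def e_def by force
qed

lemma hessian_bound_le_two_powr:
  assumes c: "hessian_bound K a c" and K: "K \<ge> 2"
  shows "c \<le> 2 powr (1 - a)"
proof -
  define u where "u t = (1 - (real K - 2) * t) / 2" for t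
  have "\<forall>\<^sub>F t in at_right 0. 0 < u t \<and> 0 < u t \<and> u t + u t \<le> 1 \<and> (K = 2 \<longleftrightarrow> u t + u t = 1)"
  proof (rule eventually_mono[OF eventually_at_right_real[of 0 "1 / real K"]])
    fix t assume "t \<in> {0<..<1 / real K}"
    then have "0 < t" "(real K - 2) * t < 1" using K by (auto simp: field_simps)
    then show "0 < u t \<and> 0 < u t \<and> u t + u t \<le> 1 \<and> (K = 2 \<longleftrightarrow> u t + u t = 1)"
      using K by (auto simp: u_def)
  qed (use K in simp)
  moreover have "((\<lambda>t. u t powr (a - 2) + u t powr (a - 2)) \<longlongrightarrow> 2 * (1 / 2) powr (a - 2)) (at_right 0)"
    unfolding u_def by (auto intro!: tendsto_eq_intros)
  ultimately have "4 * c \<le> 2 * (1 / 2) powr (a - 2)"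
    by (rule hessian_bound_two_point_limit[OF c K])
  then show ?thesis by (simp add: two_mul_half_powr)
qed

lemma hessian_bound_2_le_quarter:
  assumes c: "hessian_bound 2 a c" and a: "a > 2"
  shows "c \<le> 1 / 4"
proof -
  have "4 * c \<le> 0 + 1 powr (a - 2)"
  proof (rule hessian_bound_two_point_limit[OF c order_refl])
    show "\<forall>\<^sub>F t :: real in at_right 0. 0 < t \<and> 0 < 1 - t \<and> t + (1 - t) \<le> 1 \<and> (2 = 2 \<longleftrightarrow> t + (1 - t) = 1)"
      using eventually_at_right_real[OF zero_less_one] by eventually_elim auto
    show "((\<lambda>t. t powr (a - 2) + (1 - t) powr (a - 2)) \<longlongrightarrow> 0 + 1 powr (a - 2)) (at_right 0)"
      using a by (intro tendsto_add tendsto_zero_powrI tendsto_powr)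
        (auto intro!: tendsto_eq_intros eventually_at_rightI[of 0 1])
  qed
  then show ?thesis by simp
qed

lemma hessian_bound_nonpos:
  assumes c: "hessian_bound K a c" and K: "K \<ge> 3" and a: "a > 2"
  shows "c \<le> 0"
proof -
  have "4 * c \<le> 0 + 0"
  proof (rule hessian_bound_two_point_limit[OF c])
    show "\<forall>\<^sub>F t :: real in at_right 0. 0 < t \<and> 0 < t \<and> t + t \<le> 1 \<and> (K = 2 \<longleftrightarrow> t + t = 1)"
      using eventually_at_right_real[of 0 "1 / 4", simplified] by eventually_elim (use K in auto)
    show "((\<lambda>t. t powr (a - 2) + t powr (a - 2)) \<longlongrightarrow> 0 + 0) (at_right 0)"
      using a by (intro tendsto_add tendsto_zero_powrI)
        (auto intro!: tendsto_eq_intros eventually_at_rightI[of 0 1])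
  qed (use K in simp)
  then show ?thesis by simp
qed

lemma hessian_bound_le_C:
  assumes K: "K \<ge> 2" and c: "hessian_bound K a c"
  shows "c \<le> C a K"
proof -
  consider "a \<le> 1" | "1 < a" "a \<le> 2" | "a > 2" "K = 2" | "a > 2" "K \<ge> 3" using K by linarith
  then show ?thesis
  proof cases
    case 1
    then show ?thesis using hessian_bound_le_two_powr[OF c K] by (simp add: C_def)
  next
    case 2
    then show ?thesis
      using hessian_bound_balanced_split[OF c K] balanced_split_powr_sum_eq_C[OF 2 K] by simp
  next
    case 3
    \<comment> \<open>For \<open>a > 2\<close>, \<open>C a 2 = min (1 / 4) (2 powr (1 - a))\<close>.\<close>
    then show ?thesis
      using hessian_bound_le_two_powr[OF c K] hessian_bound_2_le_quarter[of a c] c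
      by (auto simp: C_def max_def powr_minus_divide)
  next
    case 4
    then show ?thesis using hessian_bound_nonpos[OF c] by (simp add: C_def)
  qed
qed

theorem corollary1:
  fixes K :: nat and \<alpha> :: real
  assumes "K \<ge> 2"
  shows "strongly_convex_relint K (\<lambda>p. - S K \<alpha> p) (C \<alpha> K)
       \<and> (\<forall>c. strongly_convex_relint K (\<lambda>p. - S K \<alpha> p) c \<longrightarrow> c \<le> C \<alpha> K)"
  using hessian_bound_C[OF assms] hessian_bound_le_C[OF assms]
  by (simp add: strongly_convex_relint_neg_S_iff)

end
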